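(* Let $\mathcal{I}\in\mathrm{Ins}(\Omega,\mathcal{H},\mathcal{K})$ be an instrument and $\mathsf{B}\in\mathcal{O}(\Lambda,\mathcal{H})$ a POVM. Then for any measure-and-prepare instrument $\mathcal{J}^{\mathsf{B}}$ that measures $\mathsf{B}$, $\mathcal{I}$ is compatible with $\mathsf{B}$ if and only if $\mathcal{I}$ is compatible with $\mathcal{J}^{\mathsf{B}}$.
   Context: All Hilbert spaces are finite-dimensional and complex, and all outcome sets are finite. A POVM $\mathsf{B}\in\mathcal{O}(\Lambda,\mathcal{H})$ is a map $y\mapsto\mathsf{B}(y)$ to positive operators with $\sum_y\mathsf{B}(y)=I$. An instrument $\mathcal{I}\in\mathrm{Ins}(\Omega,\mathcal{H},\mathcal{K})$ is a family $(\mathcal{I}_x)_{x\in\Omega}$ of completely positive trace-nonincreasing linear maps $\mathcal{L}(\mathcal{H})\to\mathcal{L}(\mathcal{K})$ whose sum is trace preserving; its induced POVM $\mathsf{A}^{\mathcal{I}}$ is given by $\mathrm{tr}[\mathsf{A}^{\mathcal{I}}(x)\varrho]=\mathrm{tr}[\mathcal{I}_x(\varrho)]$. A measure-and-prepare instrument measuring $\mathsf{B}$ is an instrument $\mathcal{J}^{\mathsf{B}}\in\mathrm{Ins}(\Lambda,\mathcal{H},\mathcal{V})$ (for some Hilbert space $\mathcal{V}$) of the form $\mathcal{J}^{\mathsf{B}}_y(\varrho)=\mathrm{tr}[\mathsf{B}(y)\varrho]\xi_y$ for some states $\{\xi_y\}_{y\in\Lambda}$ on $\mathcal{V}$. Two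 instruments $\mathcal{I}\in\mathrm{Ins}(\Omega,\mathcal{H},\mathcal{K})$, $\mathcal{J}\in\mathrm{Ins}(\Lambda,\mathcal{H},\mathcal{V})$ are compatible if there is $\mathcal{G}\in\mathrm{Ins}(\Omega\times\Lambda,\mathcal{H},\mathcal{K}\otimes\mathcal{V})$ with $\sum_{x}\mathrm{tr}_{\mathcal{K}}[\mathcal{G}_{(x,y)}(\varrho)]=\mathcal{J}_y(\varrho)$ for all $y$ and $\sum_y\mathrm{tr}_{\mathcal{V}}[\mathcal{G}_{(x,y)}(\varrho)]=\mathcal{I}_x(\varrho)$ for all $x$, for all states $\varrho$. An instrument $\mathcal{I}\in\mathrm{Ins}(\Omega,\mathcal{H},\mathcal{K})$ and a POVM $\mathsf{B}\in\mathcal{O}(\Lambda,\mathcal{H})$ are compatible if there is $\mathcal{R}\in\mathrm{Ins}(\Omega\times\Lambda,\mathcal{H},\mathcal{K})$ with $\sum_y\mathcal{R}_{(x,y)}=\mathcal{I}_x$ for all $x$ and $\sum_x\mathsf{A}^{\mathcal{R}}(x,y)=\mathsf{B}(y)$ for all $y$. *)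

theory Defs
  imports "HOL-Analysis.Analysis"
begin

text \<open>Operators on a finite-dimensional Hilbert space C^'n are matrices complex^'n^'n
  (dimension = CARD('n)). The tensor product K (x) V is modelled by the index type 'k \<times> 'v.\<close>

type_synonym 'n op = "complex^'n^'n"

definition mtrace :: "'n::finite op \<Rightarrow> complex" where
  "mtrace A = (\<Sum>i\<in>UNIV. A$i$i)"

definition cscale :: "complex \<Rightarrow> 'n::finite op \<Rightarrow> 'n op" where
  "cscale c A = (\<chi> i j. c * A$i$j)"

definition idop :: "'n::finite op" where
  "idop = mat 1"

definition pos_op :: "'n::finite op \<Rightarrow> bool" where
  "pos_op A \<longleftrightarrow> (\<forall>x::complex^'n.
      let q = (\<Sum>i\<in>UNIV. \<Sum>j\<in>UNIV. cnj (x$i) * A$i$j * x$j) in Im q = 0 \<and> Re q \<ge> 0)"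

definition is_state :: "'n::finite op \<Rightarrow> bool" where
  "is_state \<rho> \<longleftrightarrow> pos_op \<rho> \<and> mtrace \<rho> = 1"

definition is_povm :: "('y::finite \<Rightarrow> 'n::finite op) \<Rightarrow> bool" where
  "is_povm B \<longleftrightarrow> (\<forall>y. pos_op (B y)) \<and> (\<Sum>y\<in>UNIV. B y) = idop"

definition clinear_map :: "('n::finite op \<Rightarrow> 'k::finite op) \<Rightarrow> bool" where
  "clinear_map \<Phi> \<longleftrightarrow> (\<forall>A B. \<Phi> (A + B) = \<Phi> A + \<Phi> B) \<and> (\<forall>c A. \<Phi> (cscale c A) = cscale c (\<Phi> A))"

text \<open>Positivity of an m \<times> m block matrix with blocks in L(C^'n), i.e. an operator on C^m (x) C^'n.\<close>
definition block_pos :: "nat \<Rightarrow> (nat \<Rightarrow> nat \<Rightarrow> 'n::finite op) \<Rightarrow> bool" where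
  "block_pos m M \<longleftrightarrow> (\<forall>x::nat \<Rightarrow> complex^'n.
      let q = (\<Sum>a<m. \<Sum>b<m. \<Sum>i\<in>UNIV. \<Sum>j\<in>UNIV. cnj (x a $ i) * (M a b)$i$j * x b $ j)
      in Im q = 0 \<and> Re q \<ge> 0)"

text \<open>Complete positivity: id_m (x) \<Phi> is positive for every ancilla dimension m.\<close>
definition comp_pos :: "('n::finite op \<Rightarrow> 'k::finite op) \<Rightarrow> bool" where
  "comp_pos \<Phi> \<longleftrightarrow> (\<forall>m M. block_pos m M \<longrightarrow> block_pos m (\<lambda>a b. \<Phi> (M a b)))"

definition trace_nonincr :: "('n::finite op \<Rightarrow> 'k::finite op) \<Rightarrow> bool" where
  "trace_nonincr \<Phi> \<longleftrightarrow> (\<forall>\<rho>. pos_op \<rho> \<longrightarrow> Re (mtrace (\<Phi> \<rho>)) \<le> Re (mtrace \<rho>))"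

definition trace_pres :: "('n::finite op \<Rightarrow> 'k::finite op) \<Rightarrow> bool" where
  "trace_pres \<Phi> \<longleftrightarrow> (\<forall>\<rho>. mtrace (\<Phi> \<rho>) = mtrace \<rho>)"

definition is_instrument :: "('x::finite \<Rightarrow> 'n::finite op \<Rightarrow> 'k::finite op) \<Rightarrow> bool" where
  "is_instrument I \<longleftrightarrow>
     (\<forall>x. clinear_map (I x) \<and> comp_pos (I x) \<and> trace_nonincr (I x))
     \<and> trace_pres (\<lambda>\<rho>. \<Sum>x\<in>UNIV. I x \<rho>)"

definition induced_povm :: "('x::finite \<Rightarrow> 'n::finite op \<Rightarrow> 'k::finite op) \<Rightarrow> 'x \<Rightarrow> 'n op" where
  "induced_povm I x = (THE A. \<forall>\<rho>. is_state \<rho> \<longrightarrow> mtrace (A ** \<rho>) = mtrace (I x \<rho>))"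

definition meas_prep :: "('y::finite \<Rightarrow> 'n::finite op) \<Rightarrow> ('y \<Rightarrow> 'v::finite op) \<Rightarrow> 'y \<Rightarrow> 'n op \<Rightarrow> 'v op" where
  "meas_prep B \<xi> y \<rho> = cscale (mtrace (B y ** \<rho>)) (\<xi> y)"

definition ptrace_left :: "('k::finite \<times> 'v::finite) op \<Rightarrow> 'v op" where
  "ptrace_left M = (\<chi> v w. \<Sum>k\<in>UNIV. M$(k,v)$(k,w))"

definition ptrace_right :: "('k::finite \<times> 'v::finite) op \<Rightarrow> 'k op" where
  "ptrace_right M = (\<chi> k l. \<Sum>v\<in>UNIV. M$(k,v)$(l,v))"

definition compatible_ins ::
  "('x::finite \<Rightarrow> 'n::finite op \<Rightarrow> 'k::finite op) \<Rightarrow> ('y::finite \<Rightarrow> 'n op \<Rightarrow> 'v::finite op) \<Rightarrow> bool" where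
  "compatible_ins I J \<longleftrightarrow> (\<exists>G :: 'x \<times> 'y \<Rightarrow> 'n op \<Rightarrow> ('k \<times> 'v) op.
     is_instrument G \<and>
     (\<forall>\<rho>. is_state \<rho> \<longrightarrow>
        (\<forall>y. (\<Sum>x\<in>UNIV. ptrace_left (G (x,y) \<rho>)) = J y \<rho>) \<and>
        (\<forall>x. (\<Sum>y\<in>UNIV. ptrace_right (G (x,y) \<rho>)) = I x \<rho>)))"

definition compatible_ins_povm ::
  "('x::finite \<Rightarrow> 'n::finite op \<Rightarrow> 'k::finite op) \<Rightarrow> ('y::finite \<Rightarrow> 'n op) \<Rightarrow> bool" where
  "compatible_ins_povm I B \<longleftrightarrow> (\<exists>R :: 'x \<times> 'y \<Rightarrow> 'n op \<Rightarrow> 'k op.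
     is_instrument R \<and>
     (\<forall>x. (\<lambda>\<rho>. \<Sum>y\<in>UNIV. R (x,y) \<rho>) = I x) \<and>
     (\<forall>y. (\<Sum>x\<in>UNIV. induced_povm R (x,y)) = B y))"

end

theory Submission
  imports Defs
begin

text \<open>If R is a joint instrument for I and B, then G_(x,y)(\<rho>) = R_(x,y)(\<rho>) \<otimes> \<xi>_y is a joint
  instrument for I and J^B; conversely, if G is a joint instrument for I and J^B, then
  R_(x,y) = tr_V \<circ> G_(x,y) is a joint instrument for I and B. In both directions the B-marginal
  is matched through tr R_(x,y)(\<rho>) = tr G_(x,y)(\<rho>), and the marginal conditions, which only
  concern states, extend to all operators because states span L(H). Complete positivity
  survives because tensoring with a positive operator (a sum of rank-one ones) and the partial
  trace (a sum of compressions) are completely positive.\<close>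

lemma cscale_component [simp]: "cscale c A $ i $ j = c * A $ i $ j"
  by (simp add: cscale_def)

lemma cscale_one [simp]: "cscale 1 A = A"
  by (simp add: vec_eq_iff)

lemma cscale_sum_left: "(\<Sum>s\<in>S. cscale (f s) A) = cscale (\<Sum>s\<in>S. f s) A"
  by (simp add: vec_eq_iff sum_distrib_right)

lemma cscale_sum_right: "cscale c (\<Sum>s\<in>S. F s) = (\<Sum>s\<in>S. cscale c (F s))"
  by (simp add: vec_eq_iff sum_distrib_left)

interpretation mtrace: Modules.additive mtrace
  by standard (simp add: mtrace_def sum.distrib)

lemma mtrace_cscale: "mtrace (cscale c A) = c * mtrace A"
  by (simp add: mtrace_def sum_distrib_left)

lemma matrix_mult_cscale_right: "A ** cscale c B = cscale c (A ** B)"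
  by (simp add: matrix_matrix_mult_def vec_eq_iff sum_distrib_left mult_ac)

lemma matrix_mult_sum_left: "(\<Sum>s\<in>S. A s) ** B = (\<Sum>s\<in>S. A s ** (B :: 'n::finite op))"
proof -
  have "Modules.additive (\<lambda>A. A ** B)"
    by standard (simp add: matrix_matrix_mult_def vec_eq_iff algebra_simps sum.distrib)
  then show ?thesis by (rule additive.sum)
qed

lemma additive_if_clinear_map: "clinear_map F \<Longrightarrow> Modules.additive F"
  unfolding clinear_map_def Modules.additive_def by blast

lemma clinear_map_cscale: "clinear_map F \<Longrightarrow> F (cscale c A) = cscale c (F A)"
  unfolding clinear_map_def by blast

lemma clinear_map_sum:
  "(\<And>s. s \<in> S \<Longrightarrow> clinear_map (F s)) \<Longrightarrow> clinear_map (\<lambda>\<rho>. \<Sum>s\<in>S. F s \<rho>)"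
  unfolding clinear_map_def by (simp add: sum.distrib cscale_sum_right)

lemma sum_UNIV_prod:
  "(\<Sum>p\<in>(UNIV :: ('a::finite \<times> 'b::finite) set). f p) = (\<Sum>a\<in>UNIV. \<Sum>b\<in>UNIV. f (a, b))"
  by (simp flip: UNIV_Times_UNIV add: sum.cartesian_product)

definition mat_unit :: "'n::finite \<Rightarrow> 'n \<Rightarrow> 'n op" where
  "mat_unit i j = (\<chi> a b. if a = i \<and> b = j then 1 else 0)"

lemma matrix_expansion: "A = (\<Sum>i\<in>UNIV. \<Sum>j\<in>UNIV. cscale (A$i$j) (mat_unit i j))"
proof -
  have "(\<Sum>i\<in>UNIV. \<Sum>j\<in>UNIV. cscale (A$i$j) (mat_unit i j))$a$b = A$a$b" for a b
  proof -
    have "(\<Sum>i\<in>UNIV. \<Sum>j\<in>UNIV. cscale (A$i$j) (mat_unit i j))$a$b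
        = (\<Sum>i\<in>UNIV. \<Sum>j\<in>UNIV. (cscale (A$i$j) (mat_unit i j))$a$b)"
      by (simp only: sum_component)
    also have "\<dots> = (\<Sum>i\<in>UNIV. \<Sum>j\<in>UNIV. if i = a \<and> j = b then A$i$j else 0)"
      by (intro sum.cong refl) (auto simp: mat_unit_def)
    also have "\<dots> = (\<Sum>i\<in>UNIV. if i = a then (\<Sum>j\<in>UNIV. if j = b then A$i$j else 0) else 0)"
      by (intro sum.cong refl) auto
    also have "\<dots> = A$a$b"
      by simp
    finally show ?thesis .
  qed
  then show ?thesis by (simp add: vec_eq_iff)
qed

lemma linear_functional_eq_trace:
  fixes f :: "'n::finite op \<Rightarrow> complex"
  assumes "Modules.additive f" and "\<And>c A. f (cscale c A) = c * f A"
  shows "f \<rho> = mtrace ((\<chi> j i. f (mat_unit i j)) ** \<rho>)"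
proof -
  have "f \<rho> = (\<Sum>i\<in>UNIV. \<Sum>j\<in>UNIV. \<rho>$i$j * f (mat_unit i j))"
    by (subst matrix_expansion[of \<rho>]) (simp add: additive.sum[OF assms(1)] assms(2))
  also have "\<dots> = (\<Sum>j\<in>UNIV. \<Sum>i\<in>UNIV. \<rho>$i$j * f (mat_unit i j))"
    by (rule sum.swap)
  also have "\<dots> = mtrace ((\<chi> j i. f (mat_unit i j)) ** \<rho>)"
    by (simp add: mtrace_def matrix_matrix_mult_def mult.commute)
  finally show ?thesis .
qed

section \<open>Positive operators\<close>

definition sesq :: "'n::finite op \<Rightarrow> complex^'n \<Rightarrow> complex^'n \<Rightarrow> complex" where
  "sesq A x y = (\<Sum>i\<in>UNIV. \<Sum>j\<in>UNIV. cnj (x$i) * A$i$j * y$j)"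

lemma pos_op_iff_sesq: "pos_op A \<longleftrightarrow> (\<forall>x. Im (sesq A x x) = 0 \<and> Re (sesq A x x) \<ge> 0)"
  unfolding pos_op_def sesq_def Let_def by simp

lemma sesq_add_left: "sesq A (x + y) z = sesq A x z + sesq A y z"
  unfolding sesq_def by (simp add: algebra_simps sum.distrib)

lemma sesq_add_right: "sesq A z (x + y) = sesq A z x + sesq A z y"
  unfolding sesq_def by (simp add: algebra_simps sum.distrib)

lemma sesq_diff: "sesq (A - B) x y = sesq A x y - sesq B x y"
  unfolding sesq_def by (simp add: algebra_simps sum_subtractf)

lemma sesq_cscale: "sesq (cscale c A) x y = c * sesq A x y"
  unfolding sesq_def by (simp add: sum_distrib_left mult_ac)

lemma sesq_axis_left: "sesq A (axis i a) y = cnj a * (\<Sum>l\<in>UNIV. A$i$l * y$l)"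
proof -
  have "sesq A (axis i a) y = (\<Sum>k\<in>UNIV. if k = i then (\<Sum>l\<in>UNIV. cnj a * A$k$l * y$l) else 0)"
    unfolding sesq_def axis_def by (intro sum.cong refl) simp
  then show ?thesis by (simp add: sum_distrib_left mult.assoc)
qed

lemma sesq_axis_right: "sesq A x (axis j b) = (\<Sum>k\<in>UNIV. cnj (x$k) * A$k$j) * b"
proof -
  have "sesq A x (axis j b) = (\<Sum>k\<in>UNIV. \<Sum>l\<in>UNIV. if l = j then cnj (x$k) * A$k$l * b else 0)"
    unfolding sesq_def axis_def by (intro sum.cong refl) simp
  then show ?thesis by (simp add: sum_distrib_right)
qed

lemma sesq_axis: "sesq A (axis i a) (axis j b) = cnj a * A$i$j * b"
proof -
  have "(\<Sum>l\<in>UNIV. A$i$l * axis j b $ l) = (\<Sum>l\<in>UNIV. if l = j then A$i$l * b else 0)"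
    unfolding axis_def by (intro sum.cong refl) simp
  then show ?thesis by (simp add: sesq_axis_left mult.assoc)
qed

lemma sesq_axis_pair: "sesq A (axis i a + axis j b) (axis i a + axis j b) =
   cnj a * A$i$i * a + cnj a * A$i$j * b + cnj b * A$j$i * a + cnj b * A$j$j * b"
  by (simp add: sesq_add_left sesq_add_right sesq_axis)

lemma zero_if_sesq_self_zero:
  assumes "\<And>x. sesq A x x = 0"
  shows "A = 0"
proof -
  have "A$i$j = 0" for i j
  proof -
    have f: "cnj a * A$i$i * a + cnj a * A$i$j * b + cnj b * A$j$i * a + cnj b * A$j$j * b = 0" for a b
      using assms sesq_axis_pair[of A i a j b] by simp
    have "A$i$i = 0" "A$j$j = 0" using f[of 1 0] f[of 0 1] by simp_all
    moreover from this have "A$i$j + A$j$i = 0" "\<i> * A$i$j - \<i> * A$j$i = 0"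
      using f[of 1 1] f[of 1 \<i>] by (simp_all add: algebra_simps)
    ultimately show ?thesis by (simp add: algebra_simps)
  qed
  then show ?thesis by (simp add: vec_eq_iff)
qed

lemma pos_op_hermitian:
  assumes "pos_op A"
  shows "A$j$i = cnj (A$i$j)"
proof -
  have f: "Im (cnj a * A$i$i * a + cnj a * A$i$j * b + cnj b * A$j$i * a + cnj b * A$j$j * b) = 0" for a b
    using assms sesq_axis_pair[of A i a j b] unfolding pos_op_iff_sesq by metis
  have ii: "Im (A$i$i) = 0" and jj: "Im (A$j$j) = 0" using f[of 1 0] f[of 0 1] by simp_all
  have "Im (A$i$j) + Im (A$j$i) = 0" using f[of 1 1] ii jj by simp
  moreover have "Re (A$i$j) - Re (A$j$i) = 0" using f[of 1 \<i>] ii jj by (simp add: algebra_simps)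
  ultimately show ?thesis by (simp add: complex_eq_iff)
qed

lemma pos_op_diag_real: "pos_op A \<Longrightarrow> A$d$d = of_real (Re (A$d$d))"
  using pos_op_hermitian[of A d d] by (metis Reals_cnj_iff complex_is_Real_iff of_real_Re)

lemma pos_op_diag_nonneg:
  assumes "pos_op A"
  shows "Re (A$d$d) \<ge> 0"
proof -
  have "Re (sesq A (axis d 1) (axis d 1)) \<ge> 0" using assms unfolding pos_op_iff_sesq by blast
  then show ?thesis by (simp add: sesq_axis)
qed

lemma pos_op_zero_diag_column:
  assumes A: "pos_op A" and "A$d$d = 0"
  shows "A$v$d = 0"
proof (rule ccontr)
  define c where "c = A$v$d"
  assume "A$v$d \<noteq> 0"
  then have "c \<noteq> 0" by (simp add: c_def)
  define r where "r = (Re (A$v$v) + 1) / (2 * (cmod c)^2)"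
  define t where "t = - of_real r * cnj c"
  \<comment> \<open>chosen so that the form at t e_d + e_v is 2 Re (c t) + A$v$v = -1\<close>
  have "Re (sesq A (axis d t + axis v 1) (axis d t + axis v 1)) \<ge> 0"
    using A unfolding pos_op_iff_sesq by blast
  moreover have "A$d$v = cnj c" using pos_op_hermitian[OF A] c_def by metis
  ultimately have "Re (cnj t * cnj c + c * t + A$v$v) \<ge> 0"
    by (simp add: sesq_axis_pair \<open>A$d$d = 0\<close> c_def[symmetric] algebra_simps)
  moreover have "cnj t * cnj c + c * t = - of_real (Re (A$v$v) + 1)"
  proof -
    have "cnj t * cnj c + c * t = - 2 * of_real r * (c * cnj c)"
      by (simp add: t_def algebra_simps)
    also have "\<dots> = - of_real (2 * r * (cmod c)^2)"
      by (metis complex_norm_square mult.assoc mult_minus_left of_real_mult of_real_numeral)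
    also have "2 * r * (cmod c)^2 = Re (A$v$v) + 1"
      using \<open>c \<noteq> 0\<close> by (simp add: r_def)
    finally show ?thesis .
  qed
  ultimately show False by simp
qed

definition rank1 :: "complex^'n::finite \<Rightarrow> 'n op" where
  "rank1 u = (\<chi> v w. u$v * cnj (u$w))"

lemma rank1_0 [simp]: "rank1 0 = 0"
  by (simp add: rank1_def vec_eq_iff)

lemma sesq_rank1:
  "sesq (rank1 u) x y = (\<Sum>i\<in>UNIV. cnj (x$i) * u$i) * (\<Sum>j\<in>UNIV. cnj (u$j) * y$j)"
  unfolding sesq_def rank1_def by (simp add: sum_product algebra_simps)

lemma mtrace_rank1: "mtrace (rank1 u) = of_real ((norm u)^2)"
proof -
  have "mtrace (rank1 u) = (\<Sum>i\<in>UNIV. u$i * cnj (u$i))"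
    by (simp add: mtrace_def rank1_def)
  also have "\<dots> = (\<Sum>i\<in>UNIV. of_real ((cmod (u$i))^2))"
    by (simp only: complex_norm_square)
  also have "\<dots> = of_real ((norm u)^2)"
    by (simp add: norm_vec_def L2_set_def sum_nonneg)
  finally show ?thesis .
qed

lemma mtrace_mult_rank1: "mtrace (A ** rank1 x) = sesq A x x"
  unfolding mtrace_def sesq_def rank1_def matrix_matrix_mult_def
  by (simp add: sum_distrib_left mult_ac)

lemma pos_op_rank1: "pos_op (rank1 u)"
proof -
  have "sesq (rank1 u) x x = of_real ((cmod (\<Sum>i\<in>UNIV. cnj (x$i) * u$i))^2)" for x
  proof -
    have "sesq (rank1 u) x x = (\<Sum>i\<in>UNIV. cnj (x$i) * u$i) * cnj (\<Sum>i\<in>UNIV. cnj (x$i) * u$i)"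
      by (simp add: sesq_rank1 mult.commute)
    then show ?thesis by (metis complex_norm_square)
  qed
  then show ?thesis unfolding pos_op_iff_sesq by simp
qed

lemma pos_op_cscale: "0 \<le> r \<Longrightarrow> pos_op A \<Longrightarrow> pos_op (cscale (of_real r) A)"
  unfolding pos_op_iff_sesq sesq_cscale by simp

lemma rank1_eq_cscale_state:
  fixes x :: "complex^'n::finite"
  shows "\<exists>c \<sigma>. is_state \<sigma> \<and> rank1 x = cscale c \<sigma>"
proof -
  have nonzero: "\<exists>c \<sigma>. is_state \<sigma> \<and> rank1 x = cscale c \<sigma>" if "x \<noteq> 0" for x :: "complex^'n"
  proof (intro exI conjI)
    have "norm x > 0" using that by simp
    then show "is_state (cscale (of_real (1 / (norm x)^2)) (rank1 x))"
      unfolding is_state_def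
      by (simp add: pos_op_cscale pos_op_rank1 mtrace_cscale mtrace_rank1
          del: of_real_divide of_real_power flip: of_real_mult)
    show "rank1 x = cscale (of_real ((norm x)^2)) (cscale (of_real (1 / (norm x)^2)) (rank1 x))"
      using \<open>norm x > 0\<close> by (simp add: vec_eq_iff flip: mult.assoc of_real_mult)
  qed
  show ?thesis
  proof (cases "x = 0")
    case True
    have "axis undefined 1 \<noteq> (0 :: complex^'n)" by (simp add: axis_eq_0_iff)
    from nonzero[OF this] obtain \<sigma> :: "'n op" where "is_state \<sigma>" by blast
    moreover have "rank1 x = cscale 0 \<sigma>" using True by (simp add: vec_eq_iff rank1_def)
    ultimately show ?thesis by blast
  qed (rule nonzero)
qed

lemma eq_if_trace_eq_on_states:
  assumes "\<And>\<rho>. is_state \<rho> \<Longrightarrow> mtrace (A ** \<rho>) = mtrace (B ** \<rho>)"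
  shows "A = B"
proof -
  have "sesq (A - B) x x = 0" for x
  proof -
    obtain c \<sigma> where "is_state \<sigma>" and "rank1 x = cscale c \<sigma>"
      using rank1_eq_cscale_state by blast
    then have "mtrace (A ** rank1 x) = mtrace (B ** rank1 x)"
      by (simp add: matrix_mult_cscale_right mtrace_cscale assms)
    then show ?thesis by (simp add: sesq_diff mtrace_mult_rank1)
  qed
  then show ?thesis using zero_if_sesq_self_zero[of "A - B"] by simp
qed

lemma clinear_map_component_eq_trace:
  assumes "clinear_map F"
  shows "F \<rho> $ p $ q = mtrace ((\<chi> j i. F (mat_unit i j) $ p $ q) ** \<rho>)"
proof (rule linear_functional_eq_trace)
  show "Modules.additive (\<lambda>\<rho>. F \<rho> $ p $ q)"
    using additive.add[OF additive_if_clinear_map[OF assms]] by unfold_locales simp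
qed (simp add: clinear_map_cscale[OF assms])

lemma clinear_map_trace_eq_trace:
  assumes "clinear_map F"
  shows "mtrace (F \<rho>) = mtrace ((\<chi> j i. mtrace (F (mat_unit i j))) ** \<rho>)"
proof (rule linear_functional_eq_trace)
  show "Modules.additive (\<lambda>\<rho>. mtrace (F \<rho>))"
    using additive.add[OF additive_if_clinear_map[OF assms]] by unfold_locales (simp add: mtrace.add)
qed (simp add: clinear_map_cscale[OF assms] mtrace_cscale)

lemma clinear_map_eq_if_eq_on_states:
  fixes F G :: "'n::finite op \<Rightarrow> 'k::finite op"
  assumes F: "clinear_map F" and G: "clinear_map G"
    and eq: "\<And>\<rho>. is_state \<rho> \<Longrightarrow> F \<rho> = G \<rho>"
  shows "F = G"
proof
  fix \<rho>
  have "F \<rho> $ p $ q = G \<rho> $ p $ q" for p q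
  proof -
    let ?MF = "\<chi> j i. F (mat_unit i j) $ p $ q" and ?MG = "\<chi> j i. G (mat_unit i j) $ p $ q"
    have "?MF = ?MG"
    proof (rule eq_if_trace_eq_on_states)
      fix \<sigma> :: "'n op"
      assume "is_state \<sigma>"
      have "mtrace (?MF ** \<sigma>) = F \<sigma> $ p $ q"
        by (rule clinear_map_component_eq_trace[OF F, symmetric])
      also have "\<dots> = G \<sigma> $ p $ q" by (simp only: eq[OF \<open>is_state \<sigma>\<close>])
      also have "\<dots> = mtrace (?MG ** \<sigma>)" by (rule clinear_map_component_eq_trace[OF G])
      finally show "mtrace (?MF ** \<sigma>) = mtrace (?MG ** \<sigma>)" .
    qed
    then show ?thesis
      using clinear_map_component_eq_trace[OF F, of \<rho>] clinear_map_component_eq_trace[OF G, of \<rho>]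
      by (simp only:)
  qed
  then show "F \<rho> = G \<rho>" by (simp add: vec_eq_iff)
qed

lemma induced_povm_trace:
  assumes "clinear_map (R x)" and "is_state \<rho>"
  shows "mtrace (induced_povm R x ** \<rho>) = mtrace (R x \<rho>)"
proof -
  let ?P = "\<lambda>A. \<forall>\<rho>. is_state \<rho> \<longrightarrow> mtrace (A ** \<rho>) = mtrace (R x \<rho>)"
  define M where "M = (\<chi> j i. mtrace (R x (mat_unit i j)))"
  have "?P M"
    unfolding M_def by (simp flip: clinear_map_trace_eq_trace[OF assms(1)])
  moreover have "A = M" if "?P A" for A
    using that \<open>?P M\<close> by (intro eq_if_trace_eq_on_states) simp
  ultimately have "?P (induced_povm R x)"
    unfolding induced_povm_def by (rule theI)
  then show ?thesis using assms(2) by blast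
qed

section \<open>Rank-one decomposition of positive operators\<close>

text \<open>One step of a Cholesky factorisation. Writing s = (A x)$d and c = A$d$d > 0, the form of
  the Schur complement A - rank1 u at x equals the form of A at x - (s / c) e_d.\<close>
lemma pos_op_diff_rank1_column:
  fixes A :: "'n::finite op" and d :: 'n
  assumes A: "pos_op A" and c_pos: "Re (A$d$d) > 0"
  defines "u \<equiv> \<chi> v. A$v$d / of_real (sqrt (Re (A$d$d)))"
  shows "pos_op (A - rank1 u)"
  unfolding pos_op_iff_sesq
proof
  fix x :: "complex^'n"
  define c where "c = Re (A$d$d)"
  define s where "s = (\<Sum>j\<in>UNIV. A$d$j * x$j)"
  define t where "t = - s / of_real c"
  have "c > 0" using c_pos by (simp add: c_def)
  have Add: "A$d$d = of_real c" using pos_op_diag_real[OF A, of d] by (simp add: c_def)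
  have herm: "A$j$i = cnj (A$i$j)" for i j using pos_op_hermitian[OF A] .
  have s_cnj: "(\<Sum>k\<in>UNIV. cnj (x$k) * A$k$d) = cnj s"
    unfolding s_def by (simp add: herm[of d] mult.commute)
  have u: "u = (\<chi> v. A$v$d / of_real (sqrt c))" by (simp add: u_def c_def)
  have "sesq (rank1 u) x x = (cnj s / of_real (sqrt c)) * (s / of_real (sqrt c))"
    unfolding sesq_rank1 u s_def
    by (simp add: herm[of d] sum_divide_distrib[symmetric] mult.commute)
  also have "\<dots> = cnj s * s / of_real c"
    using \<open>c > 0\<close> by (simp flip: of_real_mult)
  finally have "sesq (A - rank1 u) x x = sesq A x x - cnj s * s / of_real c"
    by (simp add: sesq_diff)
  also have "\<dots> = sesq A x x + cnj s * t + cnj t * s + cnj t * of_real c * t"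
    using \<open>c > 0\<close> by (simp add: t_def field_simps)
  also have "\<dots> = sesq A (x + axis d t) (x + axis d t)"
  proof -
    have "sesq A x (axis d t) = cnj s * t" by (simp only: sesq_axis_right s_cnj)
    moreover have "sesq A (axis d t) x = cnj t * s" by (simp add: sesq_axis_left s_def)
    moreover have "sesq A (axis d t) (axis d t) = cnj t * of_real c * t" by (simp add: sesq_axis Add)
    ultimately show ?thesis by (simp add: sesq_add_left sesq_add_right add.assoc)
  qed
  finally have eq: "sesq (A - rank1 u) x x = sesq A (x + axis d t) (x + axis d t)" .
  show "Im (sesq (A - rank1 u) x x) = 0 \<and> 0 \<le> Re (sesq (A - rank1 u) x x)"
    unfolding eq using A unfolding pos_op_iff_sesq by blast
qed

lemma pos_op_schur_step:
  fixes A :: "'n::finite op" and d :: 'n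
  assumes A: "pos_op A"
  defines "u \<equiv> \<chi> v. A$v$d / of_real (sqrt (Re (A$d$d)))"
  shows "pos_op (A - rank1 u)" and "(A - rank1 u)$v$d = 0" and "(A - rank1 u)$d$v = 0"
proof -
  define c where "c = Re (A$d$d)"
  have u: "u$v = A$v$d / of_real (sqrt c)" for v by (simp add: u_def c_def)
  have herm: "A$j$i = cnj (A$i$j)" for i j using pos_op_hermitian[OF A] .
  have Add: "A$d$d = of_real c" using pos_op_diag_real[OF A, of d] by (simp add: c_def)
  have "pos_op (A - rank1 u) \<and> (A - rank1 u)$v$d = 0" for v
  proof (cases "c = 0")
    case True
    then have "u = 0" by (simp add: u vec_eq_iff)
    then show ?thesis using A pos_op_zero_diag_column[OF A] True Add by simp
  next
    case False
    then have "c > 0" using pos_op_diag_nonneg[OF A, of d] by (simp add: c_def)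
    have "u$d = of_real (sqrt c)"
      using \<open>c > 0\<close> by (simp add: u Add real_div_sqrt flip: of_real_divide)
    then have "(A - rank1 u)$v$d = 0"
      using \<open>c > 0\<close> by (simp add: rank1_def u[of v])
    moreover have "pos_op (A - rank1 u)"
      using pos_op_diff_rank1_column[OF A] \<open>c > 0\<close> by (simp add: u_def c_def)
    ultimately show ?thesis by simp
  qed
  moreover have "(A - rank1 u)$d$v = cnj ((A - rank1 u)$v$d)"
    by (simp add: rank1_def herm[of v d])
  ultimately show "pos_op (A - rank1 u)" "(A - rank1 u)$v$d = 0" "(A - rank1 u)$d$v = 0"
    by simp_all
qed

lemma pos_op_rank1_decomposition_on:
  fixes A :: "'n::finite op"
  assumes "finite D" and "pos_op A" and "\<And>i j. i \<notin> D \<or> j \<notin> D \<Longrightarrow> A$i$j = 0"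
  shows "\<exists>U. A = (\<Sum>r\<in>D. rank1 (U r))"
  using assms
proof (induction D arbitrary: A rule: finite_induct)
  case empty
  then show ?case by (simp add: vec_eq_iff)
next
  case (insert d D)
  define u where "u = (\<chi> v. A$v$d / of_real (sqrt (Re (A$d$d))))"
  have "\<exists>U. A - rank1 u = (\<Sum>r\<in>D. rank1 (U r))"
  proof (rule insert.IH)
    show "pos_op (A - rank1 u)" using pos_op_schur_step(1)[OF insert.prems(1)] by (simp add: u_def)
    have u_out: "u$i = 0" if "i \<notin> insert d D" for i
      using insert.prems(2)[of i d] that by (simp add: u_def)
    have col: "(A - rank1 u)$k$d = 0" and row: "(A - rank1 u)$d$k = 0" for k
      unfolding u_def using pos_op_schur_step(2,3)[OF insert.prems(1)] by blast+
    show "(A - rank1 u)$i$j = 0" if "i \<notin> D \<or> j \<notin> D" for i j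
    proof (cases "i = d \<or> j = d")
      case True
      then show ?thesis by (metis col row)
    next
      case False
      then have out: "i \<notin> insert d D \<or> j \<notin> insert d D" using that by blast
      then have "u$i = 0 \<or> u$j = 0" using u_out by blast
      then show ?thesis using insert.prems(2)[OF out] by (auto simp: rank1_def)
    qed
  qed
  then obtain U where U: "A - rank1 u = (\<Sum>r\<in>D. rank1 (U r))" ..
  have "(\<Sum>r\<in>D. rank1 ((U(d := u)) r)) = (\<Sum>r\<in>D. rank1 (U r))"
    using insert.hyps(2) by (intro sum.cong refl) auto
  then have "(\<Sum>r\<in>insert d D. rank1 ((U(d := u)) r)) = rank1 u + (A - rank1 u)"
    by (simp only: sum.insert[OF insert.hyps] fun_upd_same U)
  then show ?case by (metis add.commute diff_add_cancel)
qed

lemma pos_op_rank1_decomposition: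
  "pos_op (A :: 'n::finite op) \<Longrightarrow> \<exists>U :: 'n \<Rightarrow> complex^'n. A = (\<Sum>r\<in>UNIV. rank1 (U r))"
  using pos_op_rank1_decomposition_on[of UNIV A] by simp

section \<open>Complete positivity of tensoring and partial tracing\<close>

lemma sesq_sum: "sesq (\<Sum>s\<in>S. A s) x y = (\<Sum>s\<in>S. sesq (A s) x y)"
proof -
  have "Modules.additive (\<lambda>A. sesq A x y)"
    by standard (simp add: sesq_def algebra_simps sum.distrib)
  then show ?thesis by (rule additive.sum)
qed

definition block_form :: "nat \<Rightarrow> (nat \<Rightarrow> nat \<Rightarrow> 'n::finite op) \<Rightarrow> (nat \<Rightarrow> complex^'n) \<Rightarrow> complex" where
  "block_form m M x = (\<Sum>a<m. \<Sum>b<m. sesq (M a b) (x a) (x b))"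

lemma block_pos_iff_block_form:
  "block_pos m M \<longleftrightarrow> (\<forall>x. Im (block_form m M x) = 0 \<and> Re (block_form m M x) \<ge> 0)"
  unfolding block_pos_def block_form_def sesq_def Let_def by simp

lemma block_pos_sum:
  assumes "\<And>s. s \<in> S \<Longrightarrow> block_pos m (M s)"
  shows "block_pos m (\<lambda>a b. \<Sum>s\<in>S. M s a b)"
  unfolding block_pos_iff_block_form
proof
  fix x
  have "block_form m (\<lambda>a b. \<Sum>s\<in>S. M s a b) x
      = (\<Sum>a<m. \<Sum>s\<in>S. \<Sum>b<m. sesq (M s a b) (x a) (x b))"
    unfolding block_form_def sesq_sum by (intro sum.cong refl) (rule sum.swap)
  also have "\<dots> = (\<Sum>s\<in>S. block_form m (M s) x)"
    unfolding block_form_def by (rule sum.swap)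
  finally have "block_form m (\<lambda>a b. \<Sum>s\<in>S. M s a b) x = (\<Sum>s\<in>S. block_form m (M s) x)" .
  then show "Im (block_form m (\<lambda>a b. \<Sum>s\<in>S. M s a b) x) = 0 \<and>
      Re (block_form m (\<lambda>a b. \<Sum>s\<in>S. M s a b) x) \<ge> 0"
    using assms unfolding block_pos_iff_block_form by (simp add: sum_nonneg)
qed

lemma block_pos_pullback:
  assumes "block_pos m M" and "\<And>a b x y. sesq (M' a b) x y = sesq (M a b) (T x) (T y)"
  shows "block_pos m M'"
  unfolding block_pos_iff_block_form
proof
  fix x
  have "block_form m M' x = block_form m M (T \<circ> x)"
    by (simp add: block_form_def assms(2))
  then show "Im (block_form m M' x) = 0 \<and> Re (block_form m M' x) \<ge> 0"
    using assms(1) unfolding block_pos_iff_block_form by simp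
qed

definition tensor :: "'k::finite op \<Rightarrow> 'v::finite op \<Rightarrow> ('k \<times> 'v) op" where
  "tensor N X = (\<chi> p q. N$fst p$fst q * X$snd p$snd q)"

lemma tensor_sum_right: "tensor N (\<Sum>r\<in>S. X r) = (\<Sum>r\<in>S. tensor N (X r))"
proof -
  have "Modules.additive (tensor N)"
    by standard (simp add: tensor_def vec_eq_iff algebra_simps)
  then show ?thesis by (rule additive.sum)
qed

lemma sesq_tensor_rank1:
  "sesq (tensor N (rank1 u)) x y =
     sesq N (\<chi> k. \<Sum>v\<in>UNIV. cnj (u$v) * x$(k,v)) (\<chi> k. \<Sum>v\<in>UNIV. cnj (u$v) * y$(k,v))"
proof -
  let ?T = "\<lambda>k v l w. cnj (x$(k,v)) * (N$k$l * (u$v * cnj (u$w))) * y$(l,w)"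
  have "sesq (tensor N (rank1 u)) x y = (\<Sum>k\<in>UNIV. \<Sum>v\<in>UNIV. \<Sum>l\<in>UNIV. \<Sum>w\<in>UNIV. ?T k v l w)"
    by (simp add: sesq_def tensor_def rank1_def sum_UNIV_prod)
  also have "\<dots> = (\<Sum>k\<in>UNIV. \<Sum>l\<in>UNIV. \<Sum>v\<in>UNIV. \<Sum>w\<in>UNIV. ?T k v l w)"
    by (intro sum.cong refl) (rule sum.swap)
  also have "\<dots> = sesq N (\<chi> k. \<Sum>v\<in>UNIV. cnj (u$v) * x$(k,v)) (\<chi> k. \<Sum>v\<in>UNIV. cnj (u$v) * y$(k,v))"
    by (simp add: sesq_def sum_distrib_left sum_distrib_right mult_ac)
  finally show ?thesis .
qed

lemma block_pos_tensor_rank1: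
  "block_pos m N \<Longrightarrow> block_pos m (\<lambda>a b. tensor (N a b) (rank1 u))"
  by (erule block_pos_pullback) (rule sesq_tensor_rank1)

lemma block_pos_tensor:
  fixes X :: "'v::finite op"
  assumes "block_pos m N" and "pos_op X"
  shows "block_pos m (\<lambda>a b. tensor (N a b) X)"
proof -
  obtain U :: "'v \<Rightarrow> complex^'v" where "X = (\<Sum>r\<in>UNIV. rank1 (U r))"
    using pos_op_rank1_decomposition[OF assms(2)] by blast
  moreover have "block_pos m (\<lambda>a b. \<Sum>r\<in>UNIV. tensor (N a b) (rank1 (U r)))"
    by (intro block_pos_sum block_pos_tensor_rank1 assms(1))
  ultimately show ?thesis by (simp add: tensor_sum_right)
qed

definition diag_block :: "'v \<Rightarrow> ('k::finite \<times> 'v::finite) op \<Rightarrow> 'k op" where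
  "diag_block v M = (\<chi> k l. M$(k,v)$(l,v))"

lemma sum_UNIV_prod_snd_eq:
  fixes g :: "'a::finite \<times> 'b::finite \<Rightarrow> 'c::comm_monoid_add"
  shows "(\<Sum>p\<in>UNIV. if snd p = v then g p else 0) = (\<Sum>k\<in>UNIV. g (k, v))"
  by (simp add: sum_UNIV_prod)

lemma sesq_diag_block:
  fixes M :: "('k::finite \<times> 'v::finite) op" and v :: 'v
  defines "emb x \<equiv> \<chi> p. if snd p = v then x$fst p else 0"
  shows "sesq (diag_block v M) x y = sesq M (emb x) (emb y)"
proof -
  have "(\<Sum>q\<in>UNIV. cnj (emb x $ p) * M$p$q * emb y $ q) = (if snd p = v then
      (\<Sum>q\<in>UNIV. if snd q = v then cnj (x$fst p) * M$p$q * y$fst q else 0) else 0)" for p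
    by (cases "snd p = v") (auto simp: emb_def intro!: sum.cong)
  then have "sesq M (emb x) (emb y) = (\<Sum>p\<in>UNIV. if snd p = v then
      (\<Sum>q\<in>UNIV. if snd q = v then cnj (x$fst p) * M$p$q * y$fst q else 0) else 0)"
    unfolding sesq_def by (rule sum.cong[OF refl])
  also have "\<dots> = sesq (diag_block v M) x y"
    by (simp add: sum_UNIV_prod_snd_eq sesq_def diag_block_def)
  finally show ?thesis ..
qed

lemma block_pos_diag_block:
  "block_pos m N \<Longrightarrow> block_pos m (\<lambda>a b. diag_block v (N a b))"
  by (erule block_pos_pullback) (rule sesq_diag_block)

lemma ptrace_right_eq_sum_diag_block: "ptrace_right M = (\<Sum>v\<in>UNIV. diag_block v M)"
  by (simp add: ptrace_right_def diag_block_def vec_eq_iff)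

lemma comp_pos_tensor:
  fixes F :: "'n::finite op \<Rightarrow> 'k::finite op"
  assumes "comp_pos F" and "pos_op X"
  shows "comp_pos (\<lambda>\<rho>. tensor (F \<rho>) X)"
  unfolding comp_pos_def
proof (intro allI impI)
  fix m and M :: "nat \<Rightarrow> nat \<Rightarrow> 'n op"
  assume "block_pos m M"
  then have "block_pos m (\<lambda>a b. F (M a b))" using assms(1) unfolding comp_pos_def by blast
  then show "block_pos m (\<lambda>a b. tensor (F (M a b)) X)" using assms(2) by (rule block_pos_tensor)
qed

lemma comp_pos_ptrace_right:
  fixes F :: "'n::finite op \<Rightarrow> ('k::finite \<times> 'v::finite) op"
  assumes "comp_pos F"
  shows "comp_pos (\<lambda>\<rho>. ptrace_right (F \<rho>))"
  unfolding comp_pos_def ptrace_right_eq_sum_diag_block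
proof (intro allI impI)
  fix m and M :: "nat \<Rightarrow> nat \<Rightarrow> 'n op"
  assume "block_pos m M"
  then have "block_pos m (\<lambda>a b. F (M a b))" using assms unfolding comp_pos_def by blast
  then show "block_pos m (\<lambda>a b. \<Sum>v\<in>UNIV. diag_block v (F (M a b)))"
    by (intro block_pos_sum block_pos_diag_block)
qed

lemma clinear_map_tensor: "clinear_map F \<Longrightarrow> clinear_map (\<lambda>\<rho>. tensor (F \<rho>) X)"
  unfolding clinear_map_def by (simp add: tensor_def vec_eq_iff algebra_simps)

lemma clinear_map_ptrace_right: "clinear_map F \<Longrightarrow> clinear_map (\<lambda>\<rho>. ptrace_right (F \<rho>))"
  unfolding clinear_map_def by (simp add: ptrace_right_def vec_eq_iff sum.distrib sum_distrib_left)

lemma mtrace_tensor: "mtrace (tensor A X) = mtrace A * mtrace X"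
  unfolding mtrace_def tensor_def by (simp add: sum_UNIV_prod sum_product)

lemma ptrace_left_tensor: "ptrace_left (tensor A X) = cscale (mtrace A) X"
  unfolding ptrace_left_def tensor_def mtrace_def by (simp add: vec_eq_iff sum_distrib_right)

lemma ptrace_right_tensor: "ptrace_right (tensor A X) = cscale (mtrace X) A"
  unfolding ptrace_right_def tensor_def mtrace_def
  by (simp add: vec_eq_iff sum_distrib_left mult.commute)

lemma mtrace_ptrace_right: "mtrace (ptrace_right M) = mtrace M"
  unfolding mtrace_def ptrace_right_def by (simp add: sum_UNIV_prod)

lemma mtrace_ptrace_left: "mtrace (ptrace_left M) = mtrace M"
  unfolding mtrace_def ptrace_left_def by (simp add: sum_UNIV_prod) (rule sum.swap)

section \<open>Instruments\<close>

lemma is_instrument_if_trace_eq: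
  assumes R: "is_instrument R"
    and lin: "\<And>p. clinear_map (G p)" and cp: "\<And>p. comp_pos (G p)"
    and tr: "\<And>p \<rho>. mtrace (G p \<rho>) = mtrace (R p \<rho>)"
  shows "is_instrument G"
  unfolding is_instrument_def
proof (intro conjI allI)
  fix p
  show "clinear_map (G p)" "comp_pos (G p)" by (fact lin, fact cp)
  show "trace_nonincr (G p)"
    using R unfolding is_instrument_def trace_nonincr_def tr by blast
next
  have "mtrace (\<Sum>p\<in>UNIV. G p \<rho>) = mtrace (\<Sum>p\<in>UNIV. R p \<rho>)" for \<rho>
    by (simp add: mtrace.sum tr)
  then show "trace_pres (\<lambda>\<rho>. \<Sum>p\<in>UNIV. G p \<rho>)"
    using R unfolding is_instrument_def trace_pres_def by simp
qed

lemma is_instrument_tensor_states: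
  assumes R: "is_instrument R" and \<sigma>: "\<And>p. is_state (\<sigma> p)"
  shows "is_instrument (\<lambda>p \<rho>. tensor (R p \<rho>) (\<sigma> p))"
proof (rule is_instrument_if_trace_eq[OF R])
  fix p
  have "clinear_map (R p)" and "comp_pos (R p)" using R by (simp_all add: is_instrument_def)
  then show "clinear_map (\<lambda>\<rho>. tensor (R p \<rho>) (\<sigma> p))" and "comp_pos (\<lambda>\<rho>. tensor (R p \<rho>) (\<sigma> p))"
    using \<sigma> by (simp_all add: clinear_map_tensor comp_pos_tensor is_state_def)
  show "mtrace (tensor (R p \<rho>) (\<sigma> p)) = mtrace (R p \<rho>)" for \<rho>
    using \<sigma> by (simp add: mtrace_tensor is_state_def)
qed

lemma is_instrument_ptrace_right:
  assumes G: "is_instrument G"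
  shows "is_instrument (\<lambda>p \<rho>. ptrace_right (G p \<rho>))"
proof (rule is_instrument_if_trace_eq[OF G])
  fix p
  have "clinear_map (G p)" and "comp_pos (G p)" using G by (simp_all add: is_instrument_def)
  then show "clinear_map (\<lambda>\<rho>. ptrace_right (G p \<rho>))" and "comp_pos (\<lambda>\<rho>. ptrace_right (G p \<rho>))"
    by (simp_all add: clinear_map_ptrace_right comp_pos_ptrace_right)
  show "mtrace (ptrace_right (G p \<rho>)) = mtrace (G p \<rho>)" for \<rho>
    by (rule mtrace_ptrace_right)
qed

lemma trace_sum_induced_povm:
  assumes "is_instrument R" and "is_state \<rho>"
  shows "mtrace ((\<Sum>x\<in>UNIV. induced_povm R (x, y)) ** \<rho>) = (\<Sum>x\<in>UNIV. mtrace (R (x, y) \<rho>))"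
proof -
  have "clinear_map (R p)" for p using assms(1) unfolding is_instrument_def by blast
  then show ?thesis by (simp add: matrix_mult_sum_left mtrace.sum induced_povm_trace assms(2))
qed

lemma compatible_ins_meas_prep_if_compatible_ins_povm:
  fixes I :: "'x::finite \<Rightarrow> 'n::finite op \<Rightarrow> 'k::finite op"
    and B :: "'y::finite \<Rightarrow> 'n op" and \<xi> :: "'y \<Rightarrow> 'v::finite op"
  assumes \<xi>: "\<And>y. is_state (\<xi> y)" and "compatible_ins_povm I B"
  shows "compatible_ins I (meas_prep B \<xi>)"
proof -
  obtain R :: "'x \<times> 'y \<Rightarrow> 'n op \<Rightarrow> 'k op" where R: "is_instrument R"
    and marg_I: "\<And>x. (\<lambda>\<rho>. \<Sum>y\<in>UNIV. R (x, y) \<rho>) = I x"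
    and marg_B: "\<And>y. (\<Sum>x\<in>UNIV. induced_povm R (x, y)) = B y"
    using assms(2) unfolding compatible_ins_povm_def by blast
  have tr_\<xi>: "mtrace (\<xi> y) = 1" for y using \<xi> by (simp add: is_state_def)
  define G where "G = (\<lambda>p \<rho>. tensor (R p \<rho>) (\<xi> (snd p)))"
  have "is_instrument G"
    unfolding G_def using R \<xi> by (rule is_instrument_tensor_states)
  moreover have "(\<Sum>x\<in>UNIV. ptrace_left (G (x, y) \<rho>)) = meas_prep B \<xi> y \<rho>"
    if "is_state \<rho>" for y \<rho>
  proof -
    have "(\<Sum>x\<in>UNIV. ptrace_left (G (x, y) \<rho>)) = cscale (\<Sum>x\<in>UNIV. mtrace (R (x, y) \<rho>)) (\<xi> y)"
      by (simp add: G_def ptrace_left_tensor cscale_sum_left)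
    also have "(\<Sum>x\<in>UNIV. mtrace (R (x, y) \<rho>)) = mtrace (B y ** \<rho>)"
      by (simp only: trace_sum_induced_povm[OF R that, symmetric] marg_B)
    finally show ?thesis by (simp only: meas_prep_def)
  qed
  moreover have "(\<Sum>y\<in>UNIV. ptrace_right (G (x, y) \<rho>)) = I x \<rho>" for x \<rho>
  proof -
    have "(\<Sum>y\<in>UNIV. ptrace_right (G (x, y) \<rho>)) = (\<Sum>y\<in>UNIV. R (x, y) \<rho>)"
      by (simp add: G_def ptrace_right_tensor tr_\<xi>)
    then show ?thesis using fun_cong[OF marg_I[of x], of \<rho>] by simp
  qed
  ultimately show ?thesis unfolding compatible_ins_def by blast
qed

lemma compatible_ins_povm_if_compatible_ins_meas_prep:
  fixes I :: "'x::finite \<Rightarrow> 'n::finite op \<Rightarrow> 'k::finite op"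
    and B :: "'y::finite \<Rightarrow> 'n op" and \<xi> :: "'y \<Rightarrow> 'v::finite op"
  assumes I: "is_instrument I" and \<xi>: "\<And>y. is_state (\<xi> y)"
    and "compatible_ins I (meas_prep B \<xi>)"
  shows "compatible_ins_povm I B"
proof -
  obtain G :: "'x \<times> 'y \<Rightarrow> 'n op \<Rightarrow> ('k \<times> 'v) op" where G: "is_instrument G"
    and marg_J: "\<And>y \<rho>. is_state \<rho> \<Longrightarrow> (\<Sum>x\<in>UNIV. ptrace_left (G (x, y) \<rho>)) = meas_prep B \<xi> y \<rho>"
    and marg_I: "\<And>x \<rho>. is_state \<rho> \<Longrightarrow> (\<Sum>y\<in>UNIV. ptrace_right (G (x, y) \<rho>)) = I x \<rho>"
    using assms(3) unfolding compatible_ins_def by blast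
  define R where "R = (\<lambda>p \<rho>. ptrace_right (G p \<rho>))"
  have R: "is_instrument R"
    unfolding R_def using G by (rule is_instrument_ptrace_right)
  have "(\<lambda>\<rho>. \<Sum>y\<in>UNIV. R (x, y) \<rho>) = I x" for x
  proof (rule clinear_map_eq_if_eq_on_states)
    show "clinear_map (\<lambda>\<rho>. \<Sum>y\<in>UNIV. R (x, y) \<rho>)" "clinear_map (I x)"
      using R I by (simp_all add: clinear_map_sum is_instrument_def)
  qed (simp add: R_def marg_I)
  moreover have "(\<Sum>x\<in>UNIV. induced_povm R (x, y)) = B y" for y
  proof (rule eq_if_trace_eq_on_states)
    fix \<rho> :: "'n op"
    assume "is_state \<rho>"
    have "mtrace ((\<Sum>x\<in>UNIV. induced_povm R (x, y)) ** \<rho>) = (\<Sum>x\<in>UNIV. mtrace (R (x, y) \<rho>))"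
      by (rule trace_sum_induced_povm[OF R \<open>is_state \<rho>\<close>])
    also have "\<dots> = mtrace (\<Sum>x\<in>UNIV. ptrace_left (G (x, y) \<rho>))"
      by (simp add: R_def mtrace.sum mtrace_ptrace_right mtrace_ptrace_left)
    also have "\<dots> = mtrace (B y ** \<rho>)"
      using \<xi> by (simp add: marg_J[OF \<open>is_state \<rho>\<close>] meas_prep_def mtrace_cscale is_state_def)
    finally show "mtrace ((\<Sum>x\<in>UNIV. induced_povm R (x, y)) ** \<rho>) = mtrace (B y ** \<rho>)" .
  qed
  ultimately show ?thesis unfolding compatible_ins_povm_def using R by blast
qed

theorem proposition8:
  fixes I :: "'x::finite \<Rightarrow> complex^'n::finite^'n \<Rightarrow> complex^'k::finite^'k"
    and B :: "'y::finite \<Rightarrow> complex^'n^'n"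
    and \<xi> :: "'y \<Rightarrow> complex^'v::finite^'v"
  assumes "is_instrument I"
    and "is_povm B"
    and "\<forall>y. is_state (\<xi> y)"
  shows "compatible_ins_povm I B \<longleftrightarrow> compatible_ins I (meas_prep B \<xi>)"
proof
  assume "compatible_ins_povm I B"
  then show "compatible_ins I (meas_prep B \<xi>)"
    by (rule compatible_ins_meas_prep_if_compatible_ins_povm[rotated]) (use assms(3) in blast)
next
  assume "compatible_ins I (meas_prep B \<xi>)"
  then show "compatible_ins_povm I B"
    by (rule compatible_ins_povm_if_compatible_ins_meas_prep[rotated 2]) (use assms(1,3) in blast)+
qed

end
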